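(* Let $k\ge 2$, $G=\Theta(2,2,2k)$, $m\ge 4$, and let $L$ be an $m$-assignment for $G$. If $wz\in E(G)$ is an edge for which there exist $x\in L(w)-L(z)$ and $y\in L(z)-L(w)$, then there are at least $(m-1)^{2k-1}(m-2)^2$ proper $L$-colorings of $G$ that color $w$ with $x$ and $z$ with $y$.
   Context: $\Theta(l_1,l_2,l_3)$ denotes two end vertices joined by three internally disjoint paths of lengths $l_1,l_2,l_3$. An $m$-assignment $L$ assigns to each vertex a set of $m$ colors; a proper $L$-coloring is a proper coloring $f$ with $f(v)\in L(v)$ for each vertex $v$. *)

theory Defs
  imports "HOL-Library.FuncSet"
begin

text \<open>Concrete labelling of Theta(2,2,2k): end vertices 0 and 1; the two paths of
length 2 are 0-2-1 and 0-3-1; the path of length 2k is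
0 - 4 - 5 - ... - (2k+2) - 1 (internal vertices 4..2k+2, i.e. 2k-1 of them).\<close>

definition theta_verts :: "nat \<Rightarrow> nat set" where
  "theta_verts k = {0..<2*k+3}"

definition theta_long_path :: "nat \<Rightarrow> nat \<Rightarrow> nat" where
  "theta_long_path k i = (if i = 0 then 0 else if i = 2*k then 1 else i + 3)"

definition theta_edges :: "nat \<Rightarrow> nat set set" where
  "theta_edges k = {{0,2},{2,1},{0,3},{3,1}}
     \<union> {{theta_long_path k i, theta_long_path k (Suc i)} | i. i < 2*k}"

definition is_m_assignment :: "nat set \<Rightarrow> nat \<Rightarrow> (nat \<Rightarrow> 'c set) \<Rightarrow> bool" where
  "is_m_assignment V m L \<longleftrightarrow> (\<forall>v\<in>V. finite (L v) \<and> card (L v) = m)"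

definition proper_L_colorings ::
    "nat set \<Rightarrow> nat set set \<Rightarrow> (nat \<Rightarrow> 'c set) \<Rightarrow> (nat \<Rightarrow> 'c) set" where
  "proper_L_colorings V E L =
     {f \<in> V \<rightarrow>\<^sub>E UNIV. (\<forall>v\<in>V. f v \<in> L v) \<and> (\<forall>a b. {a,b} \<in> E \<longrightarrow> f a \<noteq> f b)}"

end

(* Colour greedily outwards from the precoloured edge wz.  If a vertex is added while at
   most d of its neighbours are already coloured, every colouring of the coloured part extends
   in at least m - d ways.  The remaining 2k + 1 vertices of Theta(2,2,2k) can be ordered so
   that all but two of them see one coloured neighbour and the last two see two:
   for an edge of the long path, colour the long path outwards from the edge in both directions
   and then the two middle vertices 2 and 3; for an edge joining an end a to a middle vertex c,
   colour the interior of the long path starting next to a, then its other end (adjacent to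
   the path and to c), and finally the other middle vertex. *)

theory Submission imports Defs begin

section \<open>Extending precoloured colourings one vertex at a time\<close>

definition pinned_colorings ::
    "nat set \<Rightarrow> nat set set \<Rightarrow> (nat \<Rightarrow> 'c set) \<Rightarrow> nat \<Rightarrow> nat \<Rightarrow> 'c \<Rightarrow> 'c \<Rightarrow> (nat \<Rightarrow> 'c) set" where
  "pinned_colorings U E L w z x y =
     {f \<in> proper_L_colorings U {e \<in> E. e \<subseteq> U} L. f w = x \<and> f z = y}"

lemma finite_pinned_colorings:
  assumes "finite U" and "\<forall>u\<in>U. finite (L u)"
  shows "finite (pinned_colorings U E L w z x y)"
proof (rule finite_subset)
  show "pinned_colorings U E L w z x y \<subseteq> PiE U L"
    by (auto simp: pinned_colorings_def proper_L_colorings_def PiE_def Pi_def)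
  show "finite (PiE U L)" using assms by (intro finite_PiE) auto
qed

lemma card_pinned_colorings_insert:
  assumes "finite V" and L: "is_m_assignment V m L" and "insert v U \<subseteq> V" and "v \<notin> U"
    and "w \<in> U" and "z \<in> U" and "{v, v} \<notin> E"
    and "card {u \<in> U. {v, u} \<in> E} \<le> d"
  shows "card (pinned_colorings U E L w z x y) * (m - d)
           \<le> card (pinned_colorings (insert v U) E L w z x y)"
proof -
  define N where "N = {u \<in> U. {v, u} \<in> E}"
  define free where "free g = L v - g ` N" for g :: "nat \<Rightarrow> 'a"
  let ?C = "pinned_colorings U E L w z x y"
  let ?C' = "pinned_colorings (insert v U) E L w z x y"
  have fin_L: "\<forall>u\<in>insert v U. finite (L u)" and card_Lv: "card (L v) = m"
    using L assms(3) by (auto simp: is_m_assignment_def)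
  have fin_U: "finite U"
    using assms(1,3) by (metis finite_insert finite_subset)
  then have fin_N: "finite N"
    by (simp add: N_def)
  have "m - d \<le> card (free g)" for g
  proof -
    have "m - d \<le> card (L v) - card (g ` N)"
      using card_Lv card_image_le[OF fin_N, of g] assms(8) by (simp add: N_def)
    also have "\<dots> \<le> card (free g)"
      unfolding free_def by (rule diff_card_le_card_Diff) (use fin_N in auto)
    finally show ?thesis .
  qed
  then have "card ?C * (m - d) \<le> (\<Sum>g\<in>?C. card (free g))"
    using sum_bounded_below[of ?C "m - d" "\<lambda>g. card (free g)"] by simp
  also have "\<dots> = card (SIGMA g:?C. free g)"
    using finite_pinned_colorings[OF fin_U] fin_L by (intro card_SigmaI[symmetric]) (auto simp: free_def)
  also have "\<dots> \<le> card ?C'"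
  proof (rule card_inj_on_le)
    show "inj_on (\<lambda>(g, c). g(v := c)) (SIGMA g:?C. free g)"
    proof (rule inj_onI, clarsimp)
      fix g g' c c'
      assume "g \<in> ?C" "g' \<in> ?C" and eq: "g(v := c) = g'(v := c')"
      then have "g v = g' v"
        using \<open>v \<notin> U\<close>
        by (simp add: pinned_colorings_def proper_L_colorings_def PiE_def extensional_def)
      then have "g = g'"
        using fun_cong[OF eq] by (intro ext) (metis fun_upd_other)
      then show "g = g' \<and> c = c'"
        using fun_cong[OF eq, of v] by simp
    qed
    show "(\<lambda>(g, c). g(v := c)) ` (SIGMA g:?C. free g) \<subseteq> ?C'"
    proof clarsimp
      fix g c assume g: "g \<in> ?C" and c: "c \<in> free g"
      have proper: "\<forall>a\<in>U. \<forall>b\<in>U. {a, b} \<in> E \<longrightarrow> g a \<noteq> g b"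
        using g by (simp add: pinned_colorings_def proper_L_colorings_def)
      have "c \<noteq> g u" if "u \<in> U" "{v, u} \<in> E" for u
        using that c by (auto simp: free_def N_def)
      then have "(g(v := c)) a \<noteq> (g(v := c)) b"
        if "a \<in> insert v U" "b \<in> insert v U" "{a, b} \<in> E" for a b
        using that proper \<open>{v, v} \<notin> E\<close> \<open>v \<notin> U\<close>
        by (cases "a = v"; cases "b = v") (auto simp: insert_commute)
      then show "g(v := c) \<in> ?C'"
        using g c \<open>v \<notin> U\<close> \<open>w \<in> U\<close> \<open>z \<in> U\<close>
        by (auto simp: pinned_colorings_def proper_L_colorings_def free_def PiE_def extensional_def)
    qed
    show "finite ?C'"
      using finite_pinned_colorings fin_U fin_L by (metis finite_insert)
  qed
  finally show ?thesis .
qed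

lemma one_le_card_pinned_colorings_edge:
  assumes "w \<noteq> z" and "x \<noteq> y" and "x \<in> L w" and "y \<in> L z"
    and "finite (L w)" and "finite (L z)" and "{w, w} \<notin> E" and "{z, z} \<notin> E"
  shows "1 \<le> card (pinned_colorings {w, z} E L w z x y)"
proof -
  let ?g = "(\<lambda>v. undefined)(w := x, z := y)"
  have "?g a \<noteq> ?g b" if "{a, b} \<in> {e \<in> E. e \<subseteq> {w, z}}" for a b
  proof -
    have "a \<in> {w, z}" "b \<in> {w, z}" "{a, b} \<in> E"
      using that by auto
    then show ?thesis
      using assms by (cases "a = b") auto
  qed
  moreover have "?g \<in> {w, z} \<rightarrow>\<^sub>E UNIV"
    by (simp add: PiE_def extensional_def)
  ultimately have "?g \<in> pinned_colorings {w, z} E L w z x y"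
    using assms unfolding pinned_colorings_def proper_L_colorings_def by auto
  moreover have "finite (pinned_colorings {w, z} E L w z x y)"
    using assms by (intro finite_pinned_colorings) auto
  ultimately show ?thesis
    by (metis One_nat_def Suc_leI card_gt_0_iff empty_iff)
qed

text \<open>Only an upper bound on neighbourhoods is recorded.\<close>

definition suspended_path :: "nat set set \<Rightarrow> nat set \<Rightarrow> nat \<Rightarrow> (nat \<Rightarrow> nat) \<Rightarrow> bool" where
  "suspended_path E X n p \<longleftrightarrow> inj_on p {..n} \<and> X \<inter> p ` {..n} = {} \<and>
     (\<forall>j\<le>n. \<forall>u. {p j, u} \<in> E \<longrightarrow>
        (0 < j \<and> u = p (j - 1)) \<or> (j < n \<and> u = p (Suc j)) \<or> ((j = 0 \<or> j = n) \<and> u \<in> X))"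

lemma suspended_path_neighbourD:
  assumes "suspended_path E X n p" and "j \<le> n" and "{p j, u} \<in> E"
  shows "(0 < j \<and> u = p (j - 1)) \<or> (j < n \<and> u = p (Suc j)) \<or> ((j = 0 \<or> j = n) \<and> u \<in> X)"
  using assms unfolding suspended_path_def by blast

lemma suspended_path_eq_iff:
  assumes "suspended_path E X n p" and "i \<le> n" and "j \<le> n"
  shows "p i = p j \<longleftrightarrow> i = j"
  using assms unfolding suspended_path_def by (auto dest: inj_onD)

lemma suspended_path_notin:
  assumes "suspended_path E X n p" and "j \<le> n"
  shows "p j \<notin> X"
  using assms unfolding suspended_path_def by auto

lemma suspended_path_no_loop:
  assumes path: "suspended_path E X n p" and "j \<le> n"
  shows "{p j, p j} \<notin> E"
proof
  assume "{p j, p j} \<in> E"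
  then have "(0 < j \<and> p j = p (j - 1)) \<or> (j < n \<and> p j = p (Suc j)) \<or> p j \<in> X"
    using suspended_path_neighbourD[OF assms] by blast
  then show False
    using \<open>j \<le> n\<close> suspended_path_eq_iff[OF path] suspended_path_notin[OF path] by force
qed

lemma suspended_path_end_neighbours:
  assumes "suspended_path E X n p" and "0 < n"
  shows "{u. {p n, u} \<in> E} \<subseteq> insert (p (n - 1)) X"
  using suspended_path_neighbourD[OF assms(1) order_refl] assms(2) by auto

lemma reverse_image_final_segment:
  assumes "i \<le> Suc n"
  shows "(\<lambda>j. f (n - j)) ` {Suc n - i..<Suc n} = f ` {..<i}"
proof -
  have "(\<lambda>j. n - j) ` {Suc n - i..<Suc n} = {..<i}"
  proof
    show "{..<i} \<subseteq> (\<lambda>j. n - j) ` {Suc n - i..<Suc n}"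
    proof
      fix j assume "j \<in> {..<i}"
      then show "j \<in> (\<lambda>j. n - j) ` {Suc n - i..<Suc n}"
        using assms by (intro image_eqI[of _ _ "n - j"]) auto
    qed
  qed (use assms in auto)
  then show ?thesis
    by (metis image_image)
qed

lemma reverse_image_atMost: "(\<lambda>j. f (n - j)) ` {..n} = f ` {..n :: nat}"
  using reverse_image_final_segment[of "Suc n" n f] by (simp add: atLeast0LessThan lessThan_Suc_atMost)

lemma suspended_path_reverse:
  assumes path: "suspended_path E X n p"
  shows "suspended_path E X n (\<lambda>j. p (n - j))"
proof -
  have "inj_on (\<lambda>j. p (n - j)) {..n}"
    using suspended_path_eq_iff[OF path] by (intro inj_onI) fastforce
  moreover have "X \<inter> (\<lambda>j. p (n - j)) ` {..n} = {}"
    using path reverse_image_atMost[of p n] unfolding suspended_path_def by simp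
  moreover have "(0 < j \<and> u = p (n - (j - 1))) \<or> (j < n \<and> u = p (n - Suc j)) \<or> ((j = 0 \<or> j = n) \<and> u \<in> X)"
    if "j \<le> n" "{p (n - j), u} \<in> E" for j u
    using suspended_path_neighbourD[OF path, of "n - j" u] that by (auto simp: Suc_diff_le)
  ultimately show ?thesis
    by (simp add: suspended_path_def)
qed

lemma card_pinned_colorings_insert_path_vertex:
  assumes "finite V" and L: "is_m_assignment V m L" and path: "suspended_path E X n p"
    and "w \<in> W" and "z \<in> W" and "insert (p j) W \<subseteq> V" and j: "j \<le> n" and "p j \<notin> W"
    and "j < n \<longrightarrow> p (Suc j) \<notin> W" and "j = 0 \<or> j = n \<longrightarrow> X \<inter> W = {}"
  shows "card (pinned_colorings W E L w z x y) * (m - 1)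
           \<le> card (pinned_colorings (insert (p j) W) E L w z x y)"
proof (rule card_pinned_colorings_insert[OF \<open>finite V\<close> L])
  have "{u \<in> W. {p j, u} \<in> E} \<subseteq> {p (j - 1)}"
    using assms(9,10) suspended_path_neighbourD[OF path j] by auto
  then show "card {u \<in> W. {p j, u} \<in> E} \<le> 1"
    using card_mono[of "{p (j - 1)}"] by fastforce
  show "{p j, p j} \<notin> E"
    by (rule suspended_path_no_loop[OF path j])
qed (use assms in auto)

lemma card_pinned_colorings_insert_path_end:
  assumes "finite V" and L: "is_m_assignment V m L" and path: "suspended_path E X n p" and "0 < n"
    and "w \<in> W" and "z \<in> W" and "insert (p n) W \<subseteq> V" and "p n \<notin> W" and "X \<inter> W \<subseteq> {c}"
  shows "card (pinned_colorings W E L w z x y) * (m - 2)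
           \<le> card (pinned_colorings (insert (p n) W) E L w z x y)"
proof (rule card_pinned_colorings_insert[OF \<open>finite V\<close> L])
  have "{u \<in> W. {p n, u} \<in> E} \<subseteq> {p (n - 1), c}"
    using suspended_path_end_neighbours[OF path \<open>0 < n\<close>] \<open>X \<inter> W \<subseteq> {c}\<close> by blast
  then have "card {u \<in> W. {p n, u} \<in> E} \<le> card {p (n - 1), c}"
    by (intro card_mono) auto
  also have "\<dots> \<le> 2"
    by (simp add: card_insert_if)
  finally show "card {u \<in> W. {p n, u} \<in> E} \<le> 2" .
  show "{p n, p n} \<notin> E"
    by (rule suspended_path_no_loop[OF path order_refl])
qed (use assms in auto)

lemma card_pinned_colorings_suspended_path:
  assumes "finite V" and L: "is_m_assignment V m L" and path: "suspended_path E X n p"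
    and "w \<in> U" and "z \<in> U"
    and "U \<union> p ` {a..<b} \<subseteq> V" and "b \<le> Suc n" and "p ` {a..<b} \<inter> U = {}"
    and "b \<le> n \<longrightarrow> p b \<notin> U" and "a = 0 \<or> b = Suc n \<longrightarrow> X \<inter> U = {}"
  shows "card (pinned_colorings U E L w z x y) * (m - 1) ^ (b - a)
           \<le> card (pinned_colorings (U \<union> p ` {a..<b}) E L w z x y)"
  using assms(6-)
proof (induction b)
  case 0
  then show ?case by simp
next
  case (Suc b)
  let ?C = "\<lambda>W. card (pinned_colorings W E L w z x y)"
  let ?W = "U \<union> p ` {a..<b}"
  show ?case
  proof (cases "a \<le> b")
    case False
    then show ?thesis by simp
  next
    case True
    note p_eq = suspended_path_eq_iff[OF path]
    have b: "b \<le> n"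
      using Suc.prems by simp
    have segment: "p ` {a..<Suc b} = insert (p b) (p ` {a..<b})"
      using True by (simp add: atLeastLessThanSuc)
    then have "p b \<notin> U" and "p ` {a..<b} \<inter> U = {}" and "insert (p b) ?W \<subseteq> V"
      using Suc.prems(1,3) by auto
    then have IH: "?C U * (m - 1) ^ (b - a) \<le> ?C ?W"
      using Suc.prems(2,5) by (intro Suc.IH) auto
    have "?C ?W * (m - 1) \<le> ?C (insert (p b) ?W)"
    proof (rule card_pinned_colorings_insert_path_vertex[OF \<open>finite V\<close> L path _ _ _ b])
      show "p b \<notin> ?W" and "b < n \<longrightarrow> p (Suc b) \<notin> ?W"
        using \<open>p b \<notin> U\<close> Suc.prems(3,4) b p_eq by auto
      show "b = 0 \<or> b = n \<longrightarrow> X \<inter> ?W = {}"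
        using Suc.prems(5) True path unfolding suspended_path_def by auto
    qed (use \<open>w \<in> U\<close> \<open>z \<in> U\<close> \<open>insert (p b) ?W \<subseteq> V\<close> in auto)
    then have step: "?C ?W * (m - 1) \<le> ?C (U \<union> p ` {a..<Suc b})"
      using segment by simp
    have "?C U * (m - 1) ^ (Suc b - a) = ?C U * (m - 1) ^ (b - a) * (m - 1)"
      using True by (simp add: Suc_diff_le)
    also have "\<dots> \<le> ?C ?W * (m - 1)"
      using IH by (rule mult_le_mono1)
    also have "\<dots> \<le> ?C (U \<union> p ` {a..<Suc b})"
      by (rule step)
    finally show ?thesis .
  qed
qed

section \<open>The theta graph\<close>

lemma theta_long_path_eq_iff:
  assumes "0 < k" and "i \<le> 2 * k" and "j \<le> 2 * k"
  shows "theta_long_path k i = theta_long_path k j \<longleftrightarrow> i = j"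
  using assms by (auto simp: theta_long_path_def)

lemma theta_long_path_0 [simp]: "theta_long_path k 0 = 0"
  by (simp add: theta_long_path_def)

lemma theta_long_path_2k [simp]: "0 < k \<Longrightarrow> theta_long_path k (2 * k) = 1"
  by (simp add: theta_long_path_def)

lemma theta_long_path_ne_middle: "theta_long_path k j \<notin> {2, 3}"
  by (simp add: theta_long_path_def)

lemma theta_edges_iff:
  "e \<in> theta_edges k \<longleftrightarrow>
     (\<exists>a\<in>{0, 1}. \<exists>c\<in>{2, 3}. e = {a, c}) \<or>
     (\<exists>i<2 * k. e = {theta_long_path k i, theta_long_path k (Suc i)})"
  by (auto simp: theta_edges_def insert_commute)

lemma theta_verts_eq:
  assumes "0 < k"
  shows "theta_verts k = theta_long_path k ` {..2 * k} \<union> {2, 3}"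
proof -
  have "v \<in> theta_long_path k ` {..2 * k}" if "v < 2 * k + 3" "v \<notin> {2, 3}" for v
  proof -
    have "v \<noteq> 2" "v \<noteq> 3"
      using that by auto
    then consider "v = 0" | "v = 1" | "4 \<le> v"
      by linarith
    then show ?thesis
    proof cases
      case 1
      then show ?thesis by (intro image_eqI[of _ _ 0]) auto
    next
      case 2
      then show ?thesis
        using assms by (intro image_eqI[of _ _ "2 * k"]) auto
    next
      case 3
      then show ?thesis
        using that by (intro image_eqI[of _ _ "v - 3"]) (auto simp: theta_long_path_def)
    qed
  qed
  moreover have "theta_long_path k j < 2 * k + 3" if "j \<le> 2 * k" for j
    using that by (simp add: theta_long_path_def)
  ultimately show ?thesis
    using assms unfolding theta_verts_def by fastforce
qed

lemma theta_edge_subset_verts: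
  assumes "0 < k" and "e \<in> theta_edges k"
  shows "e \<subseteq> theta_verts k"
  using assms theta_long_path_2k[OF assms(1)] by (force simp: theta_edges_iff theta_verts_eq)

lemma theta_no_loop:
  assumes "0 < k"
  shows "{v, v} \<notin> theta_edges k"
  using assms theta_long_path_eq_iff[OF assms]
  by (auto simp: theta_edges_iff doubleton_eq_iff)

lemma theta_middle_neighbours:
  assumes "c \<in> {2, 3}" and "{c, u} \<in> theta_edges k"
  shows "u \<in> {0, 1}"
  using assms theta_long_path_ne_middle by (auto simp: theta_edges_iff doubleton_eq_iff)

lemma suspended_path_theta_long_path:
  assumes "0 < k"
  shows "suspended_path (theta_edges k) {2, 3} (2 * k) (theta_long_path k)"
  unfolding suspended_path_def
proof (intro conjI allI impI)
  let ?p = "theta_long_path k"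
  note eq = theta_long_path_eq_iff[OF assms]
  show "inj_on ?p {..2 * k}"
    using eq by (auto intro: inj_onI)
  show "{2, 3} \<inter> ?p ` {..2 * k} = {}"
    using theta_long_path_ne_middle[of k] by auto
  fix j u assume j: "j \<le> 2 * k" and "{?p j, u} \<in> theta_edges k"
  then consider a c where "a \<in> {0, 1}" "c \<in> {2, 3}" "{?p j, u} = {a, c}"
    | i where "i < 2 * k" "{?p j, u} = {?p i, ?p (Suc i)}"
    by (auto simp: theta_edges_iff)
  then show "(0 < j \<and> u = ?p (j - 1)) \<or> (j < 2 * k \<and> u = ?p (Suc j)) \<or>
             ((j = 0 \<or> j = 2 * k) \<and> u \<in> {2, 3})"
  proof cases
    case (1 a c)
    show ?thesis
      using 1 j assms eq[of j 0] eq[of j "2 * k"] theta_long_path_ne_middle[of k j]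
      by (auto simp: doubleton_eq_iff)
  next
    case (2 i)
    then show ?thesis
      using j eq[of j i] eq[of j "Suc i"] by (auto simp: doubleton_eq_iff)
  qed
qed

lemma card_pinned_colorings_theta_insert_middle:
  assumes "0 < k" and L: "is_m_assignment (theta_verts k) m L"
    and "c \<in> {2, 3}" and "c \<notin> U" and "insert c U \<subseteq> theta_verts k" and "w \<in> U" and "z \<in> U"
  shows "card (pinned_colorings U (theta_edges k) L w z x y) * (m - 2)
           \<le> card (pinned_colorings (insert c U) (theta_edges k) L w z x y)"
proof (rule card_pinned_colorings_insert[OF _ L])
  have "card {u \<in> U. {c, u} \<in> theta_edges k} \<le> card {0, 1 :: nat}"
    using theta_middle_neighbours[OF \<open>c \<in> {2, 3}\<close>] by (intro card_mono) auto
  then show "card {u \<in> U. {c, u} \<in> theta_edges k} \<le> 2"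
    by simp
  show "finite (theta_verts k)"
    by (simp add: theta_verts_def)
  show "{c, c} \<notin> theta_edges k"
    by (rule theta_no_loop[OF \<open>0 < k\<close>])
qed (use assms in auto)

lemma suspended_path_theta_from_end:
  assumes "0 < k" and "a \<in> {0, 1}"
  obtains q where "suspended_path (theta_edges k) {2, 3} (2 * k) q"
    and "q 0 = a" and "q (2 * k) = 1 - a" and "q ` {..2 * k} = theta_long_path k ` {..2 * k}"
proof (cases "a = 0")
  case True
  then show ?thesis
    using that[OF suspended_path_theta_long_path[OF assms(1)]] assms(1) by simp
next
  case False
  then show ?thesis
    using that[OF suspended_path_reverse[OF suspended_path_theta_long_path[OF assms(1)]]]
      reverse_image_atMost[of "theta_long_path k" "2 * k"] assms
    by simp
qed

lemma card_pinned_colorings_path_edge_to_long_path: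
  assumes k: "0 < k" and L: "is_m_assignment (theta_verts k) m L" and i: "i < 2 * k"
    and wz: "{w, z} = {theta_long_path k i, theta_long_path k (Suc i)}"
  shows "card (pinned_colorings {w, z} (theta_edges k) L w z x y) * (m - 1) ^ (2 * k - 1)
           \<le> card (pinned_colorings (theta_long_path k ` {..2 * k}) (theta_edges k) L w z x y)"
proof -
  let ?p = "theta_long_path k"
  let ?C = "\<lambda>U. card (pinned_colorings U (theta_edges k) L w z x y)"
  have path: "suspended_path (theta_edges k) {2, 3} (2 * k) ?p"
    by (rule suspended_path_theta_long_path[OF k])
  note eq = theta_long_path_eq_iff[OF k]
  have fin: "finite (theta_verts k)" and path_sub: "?p ` {..2 * k} \<subseteq> theta_verts k"
    using theta_verts_eq[OF k] by (auto simp: theta_verts_def)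
  have r_image: "(\<lambda>j. ?p (2 * k - j)) ` {Suc (2 * k) - i..<Suc (2 * k)} = ?p ` {..<i}"
    using i by (intro reverse_image_final_segment) simp
  have U1: "{w, z} \<union> ?p ` {..<i} = ?p ` {..<i + 2}"
    using wz by (auto simp: lessThan_Suc)
  have "?C {w, z} * (m - 1) ^ (Suc (2 * k) - (Suc (2 * k) - i))
          \<le> ?C ({w, z} \<union> (\<lambda>j. ?p (2 * k - j)) ` {Suc (2 * k) - i..<Suc (2 * k)})"
  proof (rule card_pinned_colorings_suspended_path[OF fin L suspended_path_reverse[OF path]])
    show "{w, z} \<union> (\<lambda>j. ?p (2 * k - j)) ` {Suc (2 * k) - i..<Suc (2 * k)} \<subseteq> theta_verts k"
      using r_image U1 i path_sub by auto
    show "(\<lambda>j. ?p (2 * k - j)) ` {Suc (2 * k) - i..<Suc (2 * k)} \<inter> {w, z} = {}"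
      using r_image wz i eq by auto
  qed (use wz theta_long_path_ne_middle in auto)
  then have s1: "?C {w, z} * (m - 1) ^ i \<le> ?C (?p ` {..<i + 2})"
    using i r_image U1 by simp
  have "?C (?p ` {..<i + 2}) * (m - 1) ^ (Suc (2 * k) - (i + 2))
          \<le> ?C (?p ` {..<i + 2} \<union> ?p ` {i + 2..<Suc (2 * k)})"
  proof (rule card_pinned_colorings_suspended_path[OF fin L path])
    show "?p ` {..<i + 2} \<union> ?p ` {i + 2..<Suc (2 * k)} \<subseteq> theta_verts k"
      using i path_sub by auto
    show "?p ` {i + 2..<Suc (2 * k)} \<inter> ?p ` {..<i + 2} = {}"
      using i eq by auto
  qed (use U1 theta_long_path_ne_middle in auto)
  moreover have "?p ` {..<i + 2} \<union> ?p ` {i + 2..<Suc (2 * k)} = ?p ` {..2 * k}"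
    using i by (auto simp flip: image_Un)
  ultimately have s2: "?C (?p ` {..<i + 2}) * (m - 1) ^ (2 * k - 1 - i) \<le> ?C (?p ` {..2 * k})"
    by simp
  have "?C {w, z} * (m - 1) ^ (2 * k - 1) = ?C {w, z} * (m - 1) ^ i * (m - 1) ^ (2 * k - 1 - i)"
    using i by (simp add: mult.assoc flip: power_add)
  also have "\<dots> \<le> ?C (?p ` {..<i + 2}) * (m - 1) ^ (2 * k - 1 - i)"
    using s1 by (rule mult_le_mono1)
  also have "\<dots> \<le> ?C (?p ` {..2 * k})"
    by (rule s2)
  finally show ?thesis .
qed

lemma card_pinned_colorings_middle_edge_to_long_path:
  assumes k: "0 < k" and L: "is_m_assignment (theta_verts k) m L"
    and a: "a \<in> {0, 1}" and c: "c \<in> {2, 3}" and wz: "{w, z} = {a, c}"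
  shows "card (pinned_colorings {w, z} (theta_edges k) L w z x y) * ((m - 1) ^ (2 * k - 1) * (m - 2))
           \<le> card (pinned_colorings (insert c (theta_long_path k ` {..2 * k})) (theta_edges k) L w z x y)"
proof -
  let ?C = "\<lambda>U. card (pinned_colorings U (theta_edges k) L w z x y)"
  obtain q where q: "suspended_path (theta_edges k) {2, 3} (2 * k) q"
    and q_ends: "q 0 = a" "q (2 * k) = 1 - a" and q_image: "q ` {..2 * k} = theta_long_path k ` {..2 * k}"
    using suspended_path_theta_from_end[OF k a] by blast
  note q_eq = suspended_path_eq_iff[OF q] and q_middle = suspended_path_notin[OF q]
  have fin: "finite (theta_verts k)"
    by (simp add: theta_verts_def)
  have sub: "insert c (q ` {..2 * k}) \<subseteq> theta_verts k"
    using q_image theta_verts_eq[OF k] c by blast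
  let ?W = "{w, z} \<union> q ` {1..<2 * k}"
  have "{..2 * k} = insert 0 (insert (2 * k) {1..<2 * k})"
    by auto
  then have W': "insert (q (2 * k)) ?W = insert c (q ` {..2 * k})"
    using q_ends(1) wz by auto
  have s1: "?C {w, z} * (m - 1) ^ (2 * k - 1) \<le> ?C ?W"
  proof (rule card_pinned_colorings_suspended_path[OF fin L q])
    show "?W \<subseteq> theta_verts k"
      using W' sub by blast
    show "q ` {1..<2 * k} \<inter> {w, z} = {}"
      using wz q_ends q_eq q_middle c by auto
  qed (use wz q_ends q_eq q_middle a c in auto)
  have "q (2 * k) \<notin> q ` {1..<2 * k}"
    using q_eq by auto
  moreover have "q (2 * k) \<noteq> a" and "q (2 * k) \<noteq> c"
    using q_eq[of "2 * k" 0] q_middle[of "2 * k"] q_ends(1) k c by auto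
  ultimately have "q (2 * k) \<notin> ?W"
    using wz by auto
  moreover have "{2, 3} \<inter> ?W \<subseteq> {c}"
    using wz a q_middle by auto
  ultimately have "?C ?W * (m - 2) \<le> ?C (insert (q (2 * k)) ?W)"
    using W' sub k by (intro card_pinned_colorings_insert_path_end[OF fin L q]) auto
  then have s2: "?C ?W * (m - 2) \<le> ?C (insert c (theta_long_path k ` {..2 * k}))"
    by (simp only: W' q_image)
  have "?C {w, z} * ((m - 1) ^ (2 * k - 1) * (m - 2)) = ?C {w, z} * (m - 1) ^ (2 * k - 1) * (m - 2)"
    by (simp add: mult.assoc)
  also have "\<dots> \<le> ?C ?W * (m - 2)"
    using s1 by (rule mult_le_mono1)
  also have "\<dots> \<le> ?C (insert c (theta_long_path k ` {..2 * k}))"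
    by (rule s2)
  finally show ?thesis .
qed

lemma card_pinned_colorings_theta_edge:
  assumes k: "0 < k" and L: "is_m_assignment (theta_verts k) m L" and "{w, z} \<in> theta_edges k"
  shows "card (pinned_colorings {w, z} (theta_edges k) L w z x y) * ((m - 1) ^ (2 * k - 1) * (m - 2) ^ 2)
           \<le> card (pinned_colorings (theta_verts k) (theta_edges k) L w z x y)"
proof -
  let ?C = "\<lambda>U. card (pinned_colorings U (theta_edges k) L w z x y)"
  let ?P = "theta_long_path k ` {..2 * k}"
  have V: "theta_verts k = ?P \<union> {2, 3}"
    by (rule theta_verts_eq[OF k])
  have P_ends: "0 \<in> ?P" "1 \<in> ?P"
    using image_eqI[of 0 "theta_long_path k" 0 "{..2 * k}"]
      image_eqI[of 1 "theta_long_path k" "2 * k" "{..2 * k}"] k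
    by auto
  note insert_middle = card_pinned_colorings_theta_insert_middle[OF k L]
  from assms(3) consider (middle) a c where "a \<in> {0, 1}" "c \<in> {2, 3}" "{w, z} = {a, c}"
    | (long_path) i where "i < 2 * k" "{w, z} = {theta_long_path k i, theta_long_path k (Suc i)}"
    unfolding theta_edges_iff by blast
  then show ?thesis
  proof cases
    case middle
    obtain c' where c': "c' \<in> {2, 3}" "c' \<noteq> c"
      using middle(2) by (intro that[of "5 - c"]) auto
    have V': "insert c' (insert c ?P) = theta_verts k"
      using V middle(2) c' by auto
    have "c' \<notin> insert c ?P"
      using c' theta_long_path_ne_middle by auto
    moreover have "a \<in> ?P"
      using middle(1) P_ends by blast
    then have "w \<in> insert c ?P" "z \<in> insert c ?P"
      using middle(3) by blast+
    ultimately have step: "?C (insert c ?P) * (m - 2) \<le> ?C (theta_verts k)"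
      using insert_middle[OF c'(1), of "insert c ?P"] V' by simp
    have "?C {w, z} * ((m - 1) ^ (2 * k - 1) * (m - 2) ^ 2)
            = ?C {w, z} * ((m - 1) ^ (2 * k - 1) * (m - 2)) * (m - 2)"
      by (simp add: power2_eq_square mult.assoc)
    also have "\<dots> \<le> ?C (insert c ?P) * (m - 2)"
      using card_pinned_colorings_middle_edge_to_long_path[OF k L middle] by (rule mult_le_mono1)
    also have "\<dots> \<le> ?C (theta_verts k)"
      by (rule step)
    finally show ?thesis .
  next
    case long_path
    have V': "insert 3 (insert 2 ?P) = theta_verts k"
      using V by auto
    have "2 \<notin> ?P" "3 \<notin> insert 2 ?P"
      using theta_long_path_ne_middle by auto
    moreover have "{w, z} \<subseteq> ?P"
      using long_path by auto
    then have "w \<in> ?P" "z \<in> ?P"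
      by blast+
    moreover have "insert 2 ?P \<subseteq> theta_verts k"
      using V' by blast
    ultimately have step2: "?C ?P * (m - 2) \<le> ?C (insert 2 ?P)"
      and step3: "?C (insert 2 ?P) * (m - 2) \<le> ?C (theta_verts k)"
      using insert_middle[of 2 ?P] insert_middle[of 3 "insert 2 ?P"] V' by simp_all
    have "?C {w, z} * ((m - 1) ^ (2 * k - 1) * (m - 2) ^ 2)
            = ?C {w, z} * (m - 1) ^ (2 * k - 1) * (m - 2) * (m - 2)"
      by (simp add: power2_eq_square mult.assoc)
    also have "\<dots> \<le> ?C ?P * (m - 2) * (m - 2)"
      using card_pinned_colorings_path_edge_to_long_path[OF k L long_path]
      by (intro mult_le_mono1)
    also have "\<dots> \<le> ?C (insert 2 ?P) * (m - 2)"
      using step2 by (rule mult_le_mono1)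
    also have "\<dots> \<le> ?C (theta_verts k)"
      by (rule step3)
    finally show ?thesis .
  qed
qed

theorem lemma23:
  fixes k m :: nat and L :: "nat \<Rightarrow> 'c set" and w z :: nat and x y :: 'c
  assumes "k \<ge> 2" and "m \<ge> 4"
    and "is_m_assignment (theta_verts k) m L"
    and "{w, z} \<in> theta_edges k"
    and "x \<in> L w - L z" and "y \<in> L z - L w"
  shows "card {f \<in> proper_L_colorings (theta_verts k) (theta_edges k) L. f w = x \<and> f z = y}
           \<ge> (m - 1) ^ (2*k - 1) * (m - 2) ^ 2"
proof -
  have k: "0 < k"
    using assms(1) by simp
  let ?C = "\<lambda>U. card (pinned_colorings U (theta_edges k) L w z x y)"
  have induced_edges: "{e \<in> theta_edges k. e \<subseteq> theta_verts k} = theta_edges k"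
    using theta_edge_subset_verts[OF k] by blast
  have "{w, z} \<subseteq> theta_verts k"
    using theta_edge_subset_verts[OF k assms(4)] .
  then have "finite (L w)" "finite (L z)"
    using assms(3) by (auto simp: is_m_assignment_def)
  then have "1 \<le> ?C {w, z}"
    using assms(5,6) theta_no_loop[OF k]
    by (intro one_le_card_pinned_colorings_edge) auto
  then have "(m - 1) ^ (2 * k - 1) * (m - 2) ^ 2
               \<le> ?C {w, z} * ((m - 1) ^ (2 * k - 1) * (m - 2) ^ 2)"
    by simp
  also have "\<dots> \<le> ?C (theta_verts k)"
    by (rule card_pinned_colorings_theta_edge[OF k assms(3,4)])
  also have "\<dots> = card {f \<in> proper_L_colorings (theta_verts k) (theta_edges k) L. f w = x \<and> f z = y}"
    by (simp add: pinned_colorings_def induced_edges)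
  finally show ?thesis .
qed

end
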